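(* For every $m\ge 1$ and every $\alpha\in\mathbb{S}_m$, the element $\alpha-\sigma_m^{-1}\alpha\sigma_m$ of the group algebra $\mathbb{C}[\mathbb{S}_m]$ lies in the linear span of all generalized Vassiliev elements in $\mathbb{C}[\mathbb{S}_m]$. Consequently any two permutations conjugate by a power of $\sigma_m$ (i.e. any two hyper arc diagrams representing the same hyper chord diagram) are equal modulo generalized Vassiliev relations.
   Context: Permutations $\alpha\in\mathbb{S}_m$ act on $[m]=\{1,\dots,m\}$; $\sigma_m=(1,2,\dots,m)$ is the standard long cycle. A permutation $\alpha\in\mathbb{S}_m$ is called a hyper arc diagram; its cycles are called hyper edges and the elements of a cycle its legs. A hyper chord diagram is the orbit of $\alpha$ under conjugation $\alpha\mapsto\sigma_m^{-k}\alpha\sigma_m^{k}$ (cyclic shift). Generalized Vassiliev elements: let $m\ge2$, $\gamma\in\mathbb{S}_{m-1}$, and $q\in[m-1]\cup\{*\}$. For $t\in\{0,1,\dots,m-1\}$ let $\alpha_t=\alpha_t(\gamma,q)\in\mathbb{S}_m$ be obtained as follows: place the points $1,\dots,m-1$ on a line in increasing order, insert a new point $x$ (the free leg) in the gap between $t$ and $t+1$ (before $1$ if $t=0$, after $m-1$ if $t=m-1$), and relabel the $m$ points by $1,\dots,m$ in order; the permutation acts as $\gamma$ on the old points, except that if $q\neq *$ then $q\mapsto x\mapsto\gamma(q)$, and if $q=*$ then $x$ is a fixed point. For a cycle $v$ of $\gamma$ put $E(\gamma,q,v)=\sum_{j\in v}\big(\alpha_{j-1}-\alpha_j\big)\in\mathbb{C}[\mathbb{S}_m]$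 (the free leg placed immediately before a leg $j$ of $v$ with sign $+$, immediately after it with sign $-$). $E(\gamma,q,v)$ is a one-hyper-arc element if $q\ne *$ and $q\in v$, and a two-hyper-arc element otherwise. Both kinds are called generalized Vassiliev elements; a function on permutations satisfies the generalized Vassiliev relations if its linear extension vanishes on all of them. *)

theory Defs
  imports "HOL-Combinatorics.Permutations" Complex_Main
begin

text \<open>Elements of the group algebra C[S_m] are functions from permutations to complex numbers
(coefficient of each permutation); only permutations of {1..m} are relevant.\<close>

definition perms :: "nat \<Rightarrow> (nat \<Rightarrow> nat) set" where
  "perms m = {p. p permutes {1..m}}"

definition delta :: "(nat \<Rightarrow> nat) \<Rightarrow> ((nat \<Rightarrow> nat) \<Rightarrow> complex)" where
  "delta a = (\<lambda>p. if p = a then 1 else 0)"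

definition long_cycle :: "nat \<Rightarrow> nat \<Rightarrow> nat" where
  "long_cycle m i = (if 1 \<le> i \<and> i < m then i + 1 else if i = m then 1 else i)"

definition lin_span :: "((nat \<Rightarrow> nat) \<Rightarrow> complex) set \<Rightarrow> ((nat \<Rightarrow> nat) \<Rightarrow> complex) set" where
  "lin_span S = {x. \<exists>F c. finite F \<and> F \<subseteq> S \<and> x = (\<lambda>p. \<Sum>v\<in>F. c v * v p)}"

text \<open>Relabelling of an old point i when the free leg is inserted between t and t+1;
the free leg itself gets label t+1.\<close>
definition ins_pos :: "nat \<Rightarrow> nat \<Rightarrow> nat" where
  "ins_pos t i = (if i \<le> t then i else i + 1)"

text \<open>alpha_t(gamma, q) in S_m, for gamma in S_(m-1); q = None encodes q = *.\<close>
definition alpha_t :: "nat \<Rightarrow> (nat \<Rightarrow> nat) \<Rightarrow> nat option \<Rightarrow> nat \<Rightarrow> nat \<Rightarrow> nat" where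
  "alpha_t m \<gamma> q t j =
     (if j < 1 \<or> m < j then j
      else if j = t + 1 then
        (case q of None \<Rightarrow> t + 1 | Some q' \<Rightarrow> ins_pos t (\<gamma> q'))
      else
        (let i = (if j \<le> t then j else j - 1) in
          if q = Some i then t + 1 else ins_pos t (\<gamma> i)))"

definition cycles_of :: "nat \<Rightarrow> (nat \<Rightarrow> nat) \<Rightarrow> nat set set" where
  "cycles_of n \<gamma> = {{(\<gamma> ^^ k) j | k. True} | j. j \<in> {1..n}}"

definition vass_elem :: "nat \<Rightarrow> (nat \<Rightarrow> nat) \<Rightarrow> nat option \<Rightarrow> nat set \<Rightarrow> ((nat \<Rightarrow> nat) \<Rightarrow> complex)" where
  "vass_elem m \<gamma> q v =
     (\<lambda>p. \<Sum>j\<in>v. delta (alpha_t m \<gamma> q (j - 1)) p - delta (alpha_t m \<gamma> q j) p)"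

definition gen_vassiliev :: "nat \<Rightarrow> ((nat \<Rightarrow> nat) \<Rightarrow> complex) set" where
  "gen_vassiliev m = {vass_elem m \<gamma> q v | \<gamma> q v.
      2 \<le> m \<and> \<gamma> permutes {1..m-1} \<and> (q = None \<or> (\<exists>q'. q = Some q' \<and> q' \<in> {1..m-1}))
      \<and> v \<in> cycles_of (m - 1) \<gamma>}"

definition lin_ext :: "nat \<Rightarrow> ((nat \<Rightarrow> nat) \<Rightarrow> complex) \<Rightarrow> ((nat \<Rightarrow> nat) \<Rightarrow> complex) \<Rightarrow> complex" where
  "lin_ext m f x = (\<Sum>p\<in>perms m. x p * f p)"

end

theory Submission
  imports Defs "HOL-Combinatorics.Orbits"
begin

text \<open>Deleting the leg 1 of \<alpha> \<in> S_m leaves \<gamma> \<in> S_(m-1) (the remaining legs relabelled by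
  i \<mapsto> i - 1) together with the leg q preceding 1 in its hyper edge, or q = * if 1 is a fixed
  point. Reinserting the free leg in front of all legs recovers \<alpha> = \<alpha>_0(\<gamma>, q), reinserting it
  behind all legs gives \<alpha>_(m-1)(\<gamma>, q) = \<sigma>_m\<inverse> \<alpha> \<sigma>_m. Summing E(\<gamma>, q, v) over all cycles v
  of \<gamma> sums \<alpha>_(j-1) - \<alpha>_j over all j \<in> [m-1], which telescopes to \<alpha>_0 - \<alpha>_(m-1).\<close>

lemma lin_span_zero: "(\<lambda>p. 0) \<in> lin_span S"
  unfolding lin_span_def by (rule CollectI, rule exI[of _ "{}"]) auto

lemma lin_span_add:
  assumes "x \<in> lin_span S" "y \<in> lin_span S"
  shows "(\<lambda>p. x p + y p) \<in> lin_span S"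
proof -
  obtain F1 c1 where F1: "finite F1" "F1 \<subseteq> S" "x = (\<lambda>p. \<Sum>v\<in>F1. c1 v * v p)"
    using assms(1) unfolding lin_span_def by blast
  obtain F2 c2 where F2: "finite F2" "F2 \<subseteq> S" "y = (\<lambda>p. \<Sum>v\<in>F2. c2 v * v p)"
    using assms(2) unfolding lin_span_def by blast
  define c where "c v = (if v \<in> F1 then c1 v else 0) + (if v \<in> F2 then c2 v else 0)" for v
  have "x p + y p = (\<Sum>v\<in>F1 \<union> F2. c v * v p)" for p
  proof -
    have "(\<Sum>v\<in>F1 \<union> F2. c v * v p) = (\<Sum>v\<in>F1 \<union> F2. if v \<in> F1 then c1 v * v p else 0)
        + (\<Sum>v\<in>F1 \<union> F2. if v \<in> F2 then c2 v * v p else 0)"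
      unfolding c_def sum.distrib[symmetric] by (rule sum.cong) (auto simp: distrib_right)
    also have "\<dots> = x p + y p"
      using F1 F2 by (simp add: sum.If_cases Int_absorb1 Int_absorb2 Int_commute)
    finally show ?thesis by simp
  qed
  then show ?thesis unfolding lin_span_def using F1 F2 by blast
qed

lemma lin_span_sum:
  assumes "finite A" "\<And>a. a \<in> A \<Longrightarrow> h a \<in> S"
  shows "(\<lambda>p. \<Sum>a\<in>A. h a p) \<in> lin_span S"
  using assms
proof (induction A rule: finite_induct)
  case empty
  then show ?case using lin_span_zero by simp
next
  case (insert a A)
  have "h a \<in> lin_span S"
    unfolding lin_span_def using insert.prems
    by (intro CollectI exI[of _ "{h a}"] exI[of _ "\<lambda>_. 1"]) auto
  then show ?case using lin_span_add insert by simp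
qed

lemma lin_ext_lin_span_eq_0:
  assumes "\<And>e. e \<in> S \<Longrightarrow> lin_ext m f e = 0" "x \<in> lin_span S"
  shows "lin_ext m f x = 0"
proof -
  obtain F c where F: "finite F" "F \<subseteq> S" "x = (\<lambda>p. \<Sum>v\<in>F. c v * v p)"
    using assms(2) unfolding lin_span_def by blast
  have "lin_ext m f x = (\<Sum>p\<in>perms m. \<Sum>v\<in>F. c v * (v p * f p))"
    unfolding lin_ext_def F(3) by (simp add: sum_distrib_right mult.assoc)
  also have "\<dots> = (\<Sum>v\<in>F. c v * lin_ext m f v)"
    unfolding lin_ext_def by (subst sum.swap) (simp add: sum_distrib_left)
  also have "\<dots> = 0" using assms(1) F(2) by (auto intro!: sum.neutral)
  finally show ?thesis .
qed

lemma lin_ext_delta_diff: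
  assumes "a \<in> perms m" "b \<in> perms m"
  shows "lin_ext m f (\<lambda>p. delta a p - delta b p) = f a - f b"
proof -
  have fin: "finite (perms m)" unfolding perms_def by (rule finite_permutations) simp
  have delta: "(\<Sum>p\<in>perms m. delta x p * f p) = f x" if "x \<in> perms m" for x
  proof -
    have "delta x p * f p = (if p = x then f x else 0)" for p by (simp add: delta_def)
    then show ?thesis using fin that by (simp add: sum.delta')
  qed
  show ?thesis
    unfolding lin_ext_def using assms
    by (simp add: left_diff_distrib sum_subtractf delta)
qed

lemma sum_diff_pred_telescope:
  fixes f :: "nat \<Rightarrow> 'a::ab_group_add"
  shows "(\<Sum>j = 1..n. f (j - 1) - f j) = f 0 - f n"
  by (induction n) (auto simp: atLeastAtMostSuc_conv)

lemma cycles_of_eq_orbits: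
  assumes "\<gamma> permutes {1..n}"
  shows "cycles_of n \<gamma> = orbit \<gamma> ` {1..n}"
proof -
  have "permutation \<gamma>" using assms permutation_permutes by blast
  then show ?thesis unfolding cycles_of_def using orbit_altdef_permutation[of \<gamma>] by auto
qed

lemma sum_cycles_of:
  assumes \<gamma>: "\<gamma> permutes {1..n}"
  shows "(\<Sum>v\<in>cycles_of n \<gamma>. \<Sum>j\<in>v. g j) = (\<Sum>j = 1..n. g j)"
proof -
  have perm: "permutation \<gamma>" using \<gamma> permutation_permutes by blast
  have fin: "finite v" if "v \<in> cycles_of n \<gamma>" for v
    using that permutes_orbit_subset[OF \<gamma>] finite_subset
    unfolding cycles_of_eq_orbits[OF \<gamma>] by blast
  have disj: "v \<inter> w = {}" if "v \<in> cycles_of n \<gamma>" "w \<in> cycles_of n \<gamma>" "v \<noteq> w" for v w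
    using that orbit_cyclic_eq3[OF cyclic_on_orbit'[OF perm]]
    unfolding cycles_of_eq_orbits[OF \<gamma>] by blast
  have "\<Union>(cycles_of n \<gamma>) = {1..n}"
    using permutes_orbit_subset[OF \<gamma>] permutation_self_in_orbit[OF perm]
    unfolding cycles_of_eq_orbits[OF \<gamma>] by blast
  then show ?thesis using sum.Union_disjoint[of "cycles_of n \<gamma>" g] fin disj by simp
qed

lemma long_cycle_permutes:
  assumes "1 \<le> m" shows "long_cycle m permutes {1..m}"
proof (rule bij_imp_permutes)
  have "inj_on (long_cycle m) {1..m}" by (auto simp: inj_on_def long_cycle_def)
  moreover have "long_cycle m ` {1..m} \<subseteq> {1..m}" using assms by (auto simp: long_cycle_def)
  ultimately show "bij_betw (long_cycle m) {1..m} {1..m}"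
    by (simp add: bij_betw_def endo_inj_surj)
qed (use assms in \<open>auto simp: long_cycle_def\<close>)

lemma inv_long_cycle:
  assumes "1 \<le> m"
  shows "inv (long_cycle m) i = (if 2 \<le> i \<and> i \<le> m then i - 1 else if i = 1 then m else i)"
proof (rule permutes_inv_eq[OF long_cycle_permutes[OF assms], THEN iffD2])
  show "long_cycle m (if 2 \<le> i \<and> i \<le> m then i - 1 else if i = 1 then m else i) = i"
    using assms by (auto simp: long_cycle_def)
qed

definition delete_first_leg :: "(nat \<Rightarrow> nat) \<Rightarrow> nat \<Rightarrow> nat" where
  "delete_first_leg \<alpha> i = (if i = 0 then 0 else (if \<alpha> (Suc i) = 1 then \<alpha> 1 else \<alpha> (Suc i)) - 1)"

definition first_leg_pred :: "(nat \<Rightarrow> nat) \<Rightarrow> nat option" where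
  "first_leg_pred \<alpha> = (if \<alpha> 1 = 1 then None else Some (inv \<alpha> 1 - 1))"

lemma delete_first_leg_permutes:
  assumes \<alpha>: "\<alpha> permutes {1..m}"
  shows "delete_first_leg \<alpha> permutes {1..m - 1}"
proof -
  define \<beta> where "\<beta> j = (if \<alpha> j = 1 then \<alpha> 1 else \<alpha> j)" for j
  have ain: "\<alpha> x \<in> {1..m} \<longleftrightarrow> x \<in> {1..m}" for x using permutes_in_image[OF \<alpha>] .
  have ainj: "\<alpha> x = \<alpha> y \<longleftrightarrow> x = y" for x y using permutes_inj[OF \<alpha>] by (simp add: inj_eq)
  have \<beta>_range: "\<beta> j \<in> {2..m}" if "j \<in> {2..m}" for j
    using that ain[of j] ain[of 1] ainj[of j 1] by (auto simp: \<beta>_def)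
  have \<beta>_inj: "\<beta> i = \<beta> j \<Longrightarrow> i = j" if "i \<in> {2..m}" "j \<in> {2..m}" for i j
    using that ainj[of i j] ainj[of 1 i] ainj[of 1 j] unfolding \<beta>_def
    by (cases "\<alpha> i = 1"; cases "\<alpha> j = 1") auto
  have \<gamma>: "delete_first_leg \<alpha> i = \<beta> (Suc i) - 1" if "i \<noteq> 0" for i
    using that by (simp add: delete_first_leg_def \<beta>_def)
  have "inj_on (delete_first_leg \<alpha>) {1..m - 1}"
  proof
    fix i j assume i: "i \<in> {1..m - 1}" and j: "j \<in> {1..m - 1}"
      and "delete_first_leg \<alpha> i = delete_first_leg \<alpha> j"
    then have "\<beta> (Suc i) - 1 = \<beta> (Suc j) - 1" using \<gamma> by simp
    moreover have "\<beta> (Suc i) \<in> {2..m}" "\<beta> (Suc j) \<in> {2..m}" using i j \<beta>_range by auto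
    ultimately have "\<beta> (Suc i) = \<beta> (Suc j)" by auto
    then show "i = j" using i j \<beta>_inj[of "Suc i" "Suc j"] by auto
  qed
  moreover have "delete_first_leg \<alpha> i \<in> {1..m - 1}" if "i \<in> {1..m - 1}" for i
  proof -
    have "Suc i \<in> {2..m}" using that by auto
    then show ?thesis using that \<gamma>[of i] \<beta>_range[of "Suc i"] by auto
  qed
  ultimately have "bij_betw (delete_first_leg \<alpha>) {1..m - 1} {1..m - 1}"
    by (simp add: bij_betw_def endo_inj_surj image_subset_iff)
  moreover have "delete_first_leg \<alpha> i = i" if "i \<notin> {1..m - 1}" for i
  proof (cases "i = 0")
    case False
    then have "\<alpha> (Suc i) = Suc i" using that by (intro permutes_not_in[OF \<alpha>]) auto
    with False show ?thesis by (simp add: delete_first_leg_def)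
  qed (simp add: delete_first_leg_def)
  ultimately show ?thesis by (rule bij_imp_permutes)
qed

lemma Suc_delete_first_leg:
  assumes \<alpha>: "\<alpha> permutes {1..m}" and i: "i \<in> {1..m - 1}"
  shows "Suc (delete_first_leg \<alpha> i) = (if \<alpha> (Suc i) = 1 then \<alpha> 1 else \<alpha> (Suc i))"
proof (cases "\<alpha> (Suc i) = 1")
  case True
  have "\<alpha> 1 \<noteq> 1" using True i injD[OF permutes_inj[OF \<alpha>], of "Suc i" 1] by auto
  moreover have "\<alpha> 1 \<in> {1..m}" using i permutes_in_image[OF \<alpha>, of 1] by auto
  ultimately show ?thesis using True i by (simp add: delete_first_leg_def)
next
  case False
  moreover have "\<alpha> (Suc i) \<in> {1..m}" using i permutes_in_image[OF \<alpha>, of "Suc i"] by auto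
  ultimately show ?thesis using i by (simp add: delete_first_leg_def)
qed

lemma first_leg_pred_SomeE:
  assumes \<alpha>: "\<alpha> permutes {1..m}" and "\<alpha> 1 \<noteq> 1"
  obtains i where "i \<in> {1..m - 1}" "\<alpha> (Suc i) = 1" "first_leg_pred \<alpha> = Some i"
proof
  have "inv \<alpha> 1 \<in> {1..m}"
    using permutes_in_image[OF permutes_inv[OF \<alpha>], of 1] permutes_not_in[OF \<alpha>, of 1] assms(2)
    by fastforce
  moreover have "inv \<alpha> 1 \<noteq> 1" using assms(2) permutes_inv_eq[OF \<alpha>, of 1 1] by blast
  ultimately have "Suc (inv \<alpha> 1 - 1) = inv \<alpha> 1" "inv \<alpha> 1 - 1 \<in> {1..m - 1}" by auto
  then show "inv \<alpha> 1 - 1 \<in> {1..m - 1}" "\<alpha> (Suc (inv \<alpha> 1 - 1)) = 1"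
    using permutes_inverses(1)[OF \<alpha>, of 1] by simp_all
  show "first_leg_pred \<alpha> = Some (inv \<alpha> 1 - 1)" using assms(2) by (simp add: first_leg_pred_def)
qed

lemma first_leg_pred_eq_Some_iff:
  assumes \<alpha>: "\<alpha> permutes {1..m}" and "1 \<le> i"
  shows "first_leg_pred \<alpha> = Some i \<longleftrightarrow> \<alpha> (Suc i) = 1"
proof
  assume Some: "first_leg_pred \<alpha> = Some i"
  then have "\<alpha> 1 \<noteq> 1" by (simp add: first_leg_pred_def split: if_splits)
  with Some show "\<alpha> (Suc i) = 1" by (metis first_leg_pred_SomeE[OF \<alpha>] option.inject)
next
  assume i: "\<alpha> (Suc i) = 1"
  then have "\<alpha> 1 \<noteq> 1" using assms(2) injD[OF permutes_inj[OF \<alpha>], of "Suc i" 1] by auto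
  then obtain i' where "\<alpha> (Suc i') = 1" "first_leg_pred \<alpha> = Some i'"
    using first_leg_pred_SomeE[OF \<alpha>] by blast
  with i show "first_leg_pred \<alpha> = Some i" using injD[OF permutes_inj[OF \<alpha>], of "Suc i" "Suc i'"] by simp
qed

lemma delete_first_leg_in:
  assumes "\<alpha> permutes {1..m}" "i \<in> {1..m - 1}"
  shows "delete_first_leg \<alpha> i \<in> {1..m - 1}"
  using permutes_in_image[OF delete_first_leg_permutes[OF assms(1)], of i] assms(2) by blast

lemma alpha_t_0_delete_first_leg:
  assumes \<alpha>: "\<alpha> permutes {1..m}"
  shows "alpha_t m (delete_first_leg \<alpha>) (first_leg_pred \<alpha>) 0 = \<alpha>"
proof
  fix j
  consider "j \<notin> {1..m}" | "j = 1" "1 \<le> m" | "j \<in> {2..m}" by fastforce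
  then show "alpha_t m (delete_first_leg \<alpha>) (first_leg_pred \<alpha>) 0 j = \<alpha> j"
  proof cases
    case 1
    then show ?thesis using permutes_not_in[OF \<alpha>, of j] by (auto simp: alpha_t_def)
  next
    case 2
    show ?thesis
    proof (cases "\<alpha> 1 = 1")
      case False
      then obtain i where i: "i \<in> {1..m - 1}" "\<alpha> (Suc i) = 1" "first_leg_pred \<alpha> = Some i"
        by (rule first_leg_pred_SomeE[OF \<alpha>])
      then show ?thesis
        using 2 Suc_delete_first_leg[OF \<alpha> i(1)] delete_first_leg_in[OF \<alpha> i(1)]
        by (simp add: alpha_t_def ins_pos_def)
    qed (use 2 in \<open>simp add: alpha_t_def first_leg_pred_def\<close>)
  next
    case 3
    then have i: "j - 1 \<in> {1..m - 1}" "Suc (j - 1) = j" by auto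
    have q: "first_leg_pred \<alpha> = Some (j - 1) \<longleftrightarrow> \<alpha> j = 1"
      using first_leg_pred_eq_Some_iff[OF \<alpha>, of "j - 1"] i by simp
    have s: "Suc (delete_first_leg \<alpha> (j - 1)) = (if \<alpha> j = 1 then \<alpha> 1 else \<alpha> j)"
      using Suc_delete_first_leg[OF \<alpha> i(1)] i by simp
    show ?thesis
      using 3 q s delete_first_leg_in[OF \<alpha> i(1)]
      by (cases "\<alpha> j = 1") (simp_all add: alpha_t_def ins_pos_def Let_def)
  qed
qed

lemma alpha_t_last_delete_first_leg:
  assumes \<alpha>: "\<alpha> permutes {1..m}" and m: "1 \<le> m"
  shows "alpha_t m (delete_first_leg \<alpha>) (first_leg_pred \<alpha>) (m - 1)
           = inv (long_cycle m) \<circ> \<alpha> \<circ> long_cycle m"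
proof
  fix j
  consider "j \<notin> {1..m}" | "j = m" | "j \<in> {1..m - 1}" by fastforce
  then show "alpha_t m (delete_first_leg \<alpha>) (first_leg_pred \<alpha>) (m - 1) j
      = (inv (long_cycle m) \<circ> \<alpha> \<circ> long_cycle m) j"
  proof cases
    case 1
    then show ?thesis using m permutes_not_in[OF \<alpha>, of j]
      by (auto simp: alpha_t_def long_cycle_def inv_long_cycle)
  next
    case 2
    show ?thesis
    proof (cases "\<alpha> 1 = 1")
      case False
      then obtain i where i: "i \<in> {1..m - 1}" "\<alpha> (Suc i) = 1" "first_leg_pred \<alpha> = Some i"
        by (rule first_leg_pred_SomeE[OF \<alpha>])
      then show ?thesis
        using 2 m Suc_delete_first_leg[OF \<alpha> i(1)] delete_first_leg_in[OF \<alpha> i(1)]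
        by (auto simp: alpha_t_def ins_pos_def long_cycle_def inv_long_cycle)
    qed (use 2 m in \<open>simp add: alpha_t_def first_leg_pred_def long_cycle_def inv_long_cycle\<close>)
  next
    case 3
    have q: "first_leg_pred \<alpha> = Some j \<longleftrightarrow> \<alpha> (Suc j) = 1"
      using first_leg_pred_eq_Some_iff[OF \<alpha>, of j] 3 by simp
    have s: "Suc (delete_first_leg \<alpha> j) = (if \<alpha> (Suc j) = 1 then \<alpha> 1 else \<alpha> (Suc j))"
      using Suc_delete_first_leg[OF \<alpha> 3] .
    show ?thesis
      using 3 q s delete_first_leg_in[OF \<alpha> 3]
      by (cases "\<alpha> (Suc j) = 1") (auto simp: alpha_t_def ins_pos_def Let_def long_cycle_def inv_long_cycle)
  qed
qed

lemma delta_diff_conj_long_cycle_in_lin_span: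
  assumes m: "1 \<le> m" and \<alpha>: "\<alpha> permutes {1..m}"
  shows "(\<lambda>p. delta \<alpha> p - delta (inv (long_cycle m) \<circ> \<alpha> \<circ> long_cycle m) p)
           \<in> lin_span (gen_vassiliev m)"
proof -
  define \<gamma> where "\<gamma> = delete_first_leg \<alpha>"
  define q where "q = first_leg_pred \<alpha>"
  have \<gamma>_perm: "\<gamma> permutes {1..m - 1}"
    unfolding \<gamma>_def by (rule delete_first_leg_permutes[OF \<alpha>])
  have q_range: "q = None \<or> (\<exists>q'. q = Some q' \<and> q' \<in> {1..m - 1})"
  proof (cases "\<alpha> 1 = 1")
    case False
    then obtain i where "i \<in> {1..m - 1}" "first_leg_pred \<alpha> = Some i"
      by (rule first_leg_pred_SomeE[OF \<alpha>])
    then show ?thesis by (simp add: q_def)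
  qed (simp add: q_def first_leg_pred_def)
  have first: "alpha_t m \<gamma> q 0 = \<alpha>"
    unfolding \<gamma>_def q_def by (rule alpha_t_0_delete_first_leg[OF \<alpha>])
  have last: "alpha_t m \<gamma> q (m - 1) = inv (long_cycle m) \<circ> \<alpha> \<circ> long_cycle m"
    unfolding \<gamma>_def q_def by (rule alpha_t_last_delete_first_leg[OF \<alpha> m])
  have "(\<lambda>p. delta \<alpha> p - delta (inv (long_cycle m) \<circ> \<alpha> \<circ> long_cycle m) p)
      = (\<lambda>p. \<Sum>v\<in>cycles_of (m - 1) \<gamma>. vass_elem m \<gamma> q v p)"
  proof
    fix p
    have "(\<Sum>v\<in>cycles_of (m - 1) \<gamma>. vass_elem m \<gamma> q v p)
        = (\<Sum>j = 1..m - 1. delta (alpha_t m \<gamma> q (j - 1)) p - delta (alpha_t m \<gamma> q j) p)"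
      unfolding vass_elem_def by (rule sum_cycles_of[OF \<gamma>_perm])
    also have "\<dots> = delta \<alpha> p - delta (inv (long_cycle m) \<circ> \<alpha> \<circ> long_cycle m) p"
      using sum_diff_pred_telescope[of "\<lambda>j. delta (alpha_t m \<gamma> q j) p"] first last by simp
    finally show "delta \<alpha> p - delta (inv (long_cycle m) \<circ> \<alpha> \<circ> long_cycle m) p
        = (\<Sum>v\<in>cycles_of (m - 1) \<gamma>. vass_elem m \<gamma> q v p)" by simp
  qed
  also have "\<dots> \<in> lin_span (gen_vassiliev m)"
  proof (rule lin_span_sum)
    show "finite (cycles_of (m - 1) \<gamma>)"
      unfolding cycles_of_eq_orbits[OF \<gamma>_perm] by simp
    fix v assume v: "v \<in> cycles_of (m - 1) \<gamma>"
    then have "2 \<le> m" unfolding cycles_of_def by auto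
    with v show "vass_elem m \<gamma> q v \<in> gen_vassiliev m"
      unfolding gen_vassiliev_def using \<gamma>_perm q_range by blast
  qed
  finally show ?thesis .
qed

lemma vassiliev_invariant_conj_long_cycle:
  assumes m: "1 \<le> m" and \<alpha>: "\<alpha> permutes {1..m}"
    and f: "\<forall>e\<in>gen_vassiliev m. lin_ext m f e = 0"
  shows "f (inv (long_cycle m) \<circ> \<alpha> \<circ> long_cycle m) = f \<alpha>"
proof -
  let ?\<beta> = "inv (long_cycle m) \<circ> \<alpha> \<circ> long_cycle m"
  have "?\<beta> permutes {1..m}"
    using long_cycle_permutes[OF m] \<alpha> by (intro permutes_compose permutes_inv)
  then have "lin_ext m f (\<lambda>p. delta \<alpha> p - delta ?\<beta> p) = f \<alpha> - f ?\<beta>"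
    using \<alpha> by (intro lin_ext_delta_diff) (simp_all add: perms_def)
  moreover have "lin_ext m f (\<lambda>p. delta \<alpha> p - delta ?\<beta> p) = 0"
    by (rule lin_ext_lin_span_eq_0[OF _ delta_diff_conj_long_cycle_in_lin_span[OF m \<alpha>]])
      (use f in blast)
  ultimately show ?thesis by simp
qed

lemma conj_funpow_Suc:
  fixes s :: "'a \<Rightarrow> 'a"
  shows "(inv s ^^ Suc k) \<circ> a \<circ> (s ^^ Suc k) = inv s \<circ> ((inv s ^^ k) \<circ> a \<circ> (s ^^ k)) \<circ> s"
proof -
  have "inv s ^^ Suc k = inv s \<circ> (inv s ^^ k)" by (rule funpow.simps(2))
  moreover have "s ^^ Suc k = (s ^^ k) \<circ> s" by (rule funpow_Suc_right)
  ultimately show ?thesis by (simp only: o_assoc)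
qed

theorem lemma1:
  fixes m :: nat and \<alpha> :: "nat \<Rightarrow> nat"
  assumes "1 \<le> m" and "\<alpha> permutes {1..m}"
  shows "(\<lambda>p. delta \<alpha> p - delta (inv (long_cycle m) \<circ> \<alpha> \<circ> long_cycle m) p)
           \<in> lin_span (gen_vassiliev m)
    \<and> (\<forall>f :: (nat \<Rightarrow> nat) \<Rightarrow> complex.
         (\<forall>e\<in>gen_vassiliev m. lin_ext m f e = 0) \<longrightarrow>
         (\<forall>k::nat. f ((inv (long_cycle m) ^^ k) \<circ> \<alpha> \<circ> (long_cycle m ^^ k)) = f \<alpha>))"
proof (intro conjI allI impI)
  show "(\<lambda>p. delta \<alpha> p - delta (inv (long_cycle m) \<circ> \<alpha> \<circ> long_cycle m) p)
           \<in> lin_span (gen_vassiliev m)"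
    by (rule delta_diff_conj_long_cycle_in_lin_span[OF assms])
next
  fix f :: "(nat \<Rightarrow> nat) \<Rightarrow> complex" and k :: nat
  assume f: "\<forall>e\<in>gen_vassiliev m. lin_ext m f e = 0"
  let ?\<sigma> = "long_cycle m"
  have "(inv ?\<sigma> ^^ k) \<circ> \<alpha> \<circ> (?\<sigma> ^^ k) permutes {1..m}
      \<and> f ((inv ?\<sigma> ^^ k) \<circ> \<alpha> \<circ> (?\<sigma> ^^ k)) = f \<alpha>"
  proof (induction k)
    case (Suc k)
    let ?\<beta> = "(inv ?\<sigma> ^^ k) \<circ> \<alpha> \<circ> (?\<sigma> ^^ k)"
    have \<beta>: "?\<beta> permutes {1..m}" and "f ?\<beta> = f \<alpha>" using Suc by blast+
    have \<sigma>: "?\<sigma> permutes {1..m}" by (rule long_cycle_permutes[OF assms(1)])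
    have "inv ?\<sigma> \<circ> ?\<beta> \<circ> ?\<sigma> permutes {1..m}"
      by (rule permutes_compose[OF \<sigma> permutes_compose[OF \<beta> permutes_inv[OF \<sigma>]]])
    moreover have "f (inv ?\<sigma> \<circ> ?\<beta> \<circ> ?\<sigma>) = f \<alpha>"
      using vassiliev_invariant_conj_long_cycle[OF assms(1) \<beta> f] \<open>f ?\<beta> = f \<alpha>\<close> by simp
    ultimately show ?case unfolding conj_funpow_Suc by blast
  qed (use assms(2) in simp)
  then show "f ((inv ?\<sigma> ^^ k) \<circ> \<alpha> \<circ> (?\<sigma> ^^ k)) = f \<alpha>" by blast
qed

end
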